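(* Let $N$ be a positive integer power of two and $j=\sqrt{-1}$. Let $\mathbf{\Phi}$ be the $N\times N$ discrete Fresnel transform matrix with entries (indices $m,n=0,\dots,N-1$) $$[\mathbf{\Phi}]_{m,n}=\frac{1}{\sqrt{N}}\,e^{-j\frac{\pi}{4}}\,e^{j\frac{\pi}{N}(n-m)^2},$$ let $\mathbf{\Delta}=\mathrm{diag}\left(e^{j\frac{2\pi}{N}\cdot 0},e^{j\frac{2\pi}{N}\cdot 1},\dots,e^{j\frac{2\pi}{N}(N-1)}\right)$, and let $\mathbf{\Pi}$ be the $N\times N$ cyclic permutation matrix with $[\mathbf{\Pi}]_{m,n}=1$ if $m\equiv n+1\pmod N$ and $0$ otherwise. Then for every integer $k$, $$\mathbf{\Phi}\mathbf{\Delta}^k\mathbf{\Phi}^H=e^{j\frac{\pi}{N}k^2}\,\mathbf{\Pi}^k\mathbf{\Delta}^k .$$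
   Context: $\mathbf{\Phi}^H$ denotes the conjugate transpose of $\mathbf{\Phi}$; $\mathbf{\Phi}$ is unitary ($\mathbf{\Phi}^H\mathbf{\Phi}=\mathbf{I}_N$). Negative powers denote powers of the inverse matrix. Equivalently, $\mathbf{\Phi}=\mathbf{\Theta}_2\mathbf{F}\mathbf{\Theta}_1$ where $\mathbf{F}$ is the unitary DFT matrix $[\mathbf{F}]_{m,n}=\frac{1}{\sqrt N}e^{-j2\pi mn/N}$, $\mathbf{\Theta}_1=\mathrm{diag}(e^{-j\pi/4}e^{j\pi m^2/N})_m$, $\mathbf{\Theta}_2=\mathrm{diag}(e^{j\pi m^2/N})_m$. *)

theory Defs
  imports Complex_Main "Jordan_Normal_Form.Schur_Decomposition"
begin

text \<open>Inverse of a square matrix (only meaningful for invertible matrices).\<close>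
definition mat_inv :: "complex mat \<Rightarrow> complex mat" where
  "mat_inv A = (SOME B. B \<in> carrier_mat (dim_row A) (dim_row A) \<and> inverts_mat A B \<and> inverts_mat B A)"

definition mat_int_pow :: "complex mat \<Rightarrow> int \<Rightarrow> complex mat" where
  "mat_int_pow A k = (if 0 \<le> k then A ^\<^sub>m nat k else (mat_inv A) ^\<^sub>m nat (- k))"

definition fresnel_mat :: "nat \<Rightarrow> complex mat" where
  "fresnel_mat N = mat N N (\<lambda>(m, n).
     (1 / csqrt (of_nat N)) * exp (- \<i> * of_real (pi / 4))
       * exp (\<i> * of_real (pi / real N) * of_int ((int n - int m)\<^sup>2)))"

definition delta_mat :: "nat \<Rightarrow> complex mat" where
  "delta_mat N = mat N N (\<lambda>(m, n).
     if m = n then exp (\<i> * of_real (2 * pi / real N) * of_nat m) else 0)"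

definition cyc_perm_mat :: "nat \<Rightarrow> complex mat" where
  "cyc_perm_mat N = mat N N (\<lambda>(m, n). if m mod N = (n + 1) mod N then 1 else 0)"

end

theory Submission
  imports Defs
begin

text \<open>Let \<zeta> = exp (j \<pi> / N), a primitive 2N-th root of unity. Then \<Phi> has entries
  c \<zeta>^((n - m)^2) with |c|^2 = 1/N, and \<Delta>^k = diag (\<zeta>^(2 k l)). Expanding the squares, the
  (m, n) entry of \<Phi> \<Delta>^k \<Phi>^H is \<zeta>^(m^2 - n^2) / N times the geometric sum of the N-th roots
  of unity \<zeta>^(2 l (k + n - m)), which is N if N divides k + n - m and 0 otherwise. So only the
  entries on the support of \<Pi>^k survive, and there \<zeta>^(m^2 - n^2) = \<zeta>^(k^2) \<zeta>^(2 k n) because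
  N is even. Negative powers are handled by identifying \<Delta>^k and \<Pi>^k with one-parameter groups
  of matrices indexed by k \<in> \<int>.\<close>

definition zeta :: "nat \<Rightarrow> int \<Rightarrow> complex" where
  "zeta N x = exp (\<i> * of_real (pi / real N) * of_int x)"

lemma zeta_add: "zeta N (a + b) = zeta N a * zeta N b"
  unfolding zeta_def by (simp add: distrib_left exp_add[symmetric])

lemma zeta_0 [simp]: "zeta N 0 = 1"
  unfolding zeta_def by simp

lemma zeta_cis: "zeta N x = cis (pi / real N * of_int x)"
  unfolding zeta_def cis_conv_exp by (simp add: mult.assoc)

lemma zeta_cnj: "cnj (zeta N x) = zeta N (- x)"
  unfolding zeta_cis cis_cnj by simp

lemma zeta_power: "zeta N x ^ l = zeta N (x * int l)"
  by (induction l) (auto simp: zeta_add distrib_left mult.commute)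

lemma zeta_multiple_2N: "zeta N (2 * int N * t) = 1"
proof (cases "N = 0")
  case False
  then have "pi / real N * of_int (2 * int N * t) = 2 * pi * of_int t"
    by (simp add: field_simps)
  then show ?thesis
    unfolding zeta_cis by simp
qed simp

lemma dvd_of_zeta_double_eq_1:
  assumes "N > 0" and "zeta N (2 * r) = 1"
  shows "int N dvd r"
proof -
  have "cos (pi / real N * of_int (2 * r)) = 1"
    using arg_cong[OF assms(2), of Re] by (simp add: zeta_cis)
  then obtain t :: int where "pi / real N * of_int (2 * r) = of_int t * 2 * pi"
    by (auto simp: cos_one_2pi_int)
  then have "real_of_int r = real N * of_int t"
    using assms(1) by (simp add: field_simps)
  then have "r = int N * t"
    by (metis of_int_eq_iff of_int_mult of_int_of_nat_eq)
  then show ?thesis by simp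
qed

lemma sum_zeta_geometric:
  assumes "N > 0"
  shows "(\<Sum>l<N. zeta N (2 * r * int l)) = (if int N dvd r then of_nat N else 0)"
proof -
  let ?w = "zeta N (2 * r)"
  have "(\<Sum>l<N. zeta N (2 * r * int l)) = (\<Sum>l<N. ?w ^ l)"
    by (simp add: zeta_power)
  also have "\<dots> = (if ?w = 1 then of_nat N else (1 - ?w ^ N) / (1 - ?w))"
    by (rule sum_gp_strict)
  also have "\<dots> = (if int N dvd r then of_nat N else 0)"
  proof (cases "int N dvd r")
    case True
    then obtain t where "r = int N * t" by blast
    then have "?w = 1"
      using zeta_multiple_2N[of _ t] by (simp add: mult.assoc)
    with True show ?thesis by simp
  next
    case False
    then have "?w \<noteq> 1"
      using dvd_of_zeta_double_eq_1[OF assms] by blast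
    moreover have "?w ^ N = 1"
      using zeta_multiple_2N[of _ r] by (simp add: zeta_power mult_ac)
    ultimately show ?thesis
      using False by simp
  qed
  finally show ?thesis .
qed

lemma sum_fresnel_chirp_products:
  fixes m n k :: int
  assumes "N > 0"
  shows "(\<Sum>l<N. zeta N ((int l - m)\<^sup>2) * zeta N (2 * k * int l) * cnj (zeta N ((int l - n)\<^sup>2)))
       = (if int N dvd (k + n - m) then of_nat N * zeta N (m\<^sup>2 - n\<^sup>2) else 0)"
proof -
  have "zeta N ((int l - m)\<^sup>2) * zeta N (2 * k * int l) * cnj (zeta N ((int l - n)\<^sup>2))
      = zeta N (m\<^sup>2 - n\<^sup>2) * zeta N (2 * (k + n - m) * int l)" for l
  proof -
    have "(int l - m)\<^sup>2 + 2 * k * int l + - ((int l - n)\<^sup>2)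
        = (m\<^sup>2 - n\<^sup>2) + 2 * (k + n - m) * int l"
      by (simp add: power2_eq_square algebra_simps)
    then show ?thesis
      by (metis zeta_add zeta_cnj)
  qed
  then have "(\<Sum>l<N. zeta N ((int l - m)\<^sup>2) * zeta N (2 * k * int l) * cnj (zeta N ((int l - n)\<^sup>2)))
      = zeta N (m\<^sup>2 - n\<^sup>2) * (\<Sum>l<N. zeta N (2 * (k + n - m) * int l))"
    by (simp only: sum_distrib_left)
  also have "\<dots> = (if int N dvd (k + n - m) then of_nat N * zeta N (m\<^sup>2 - n\<^sup>2) else 0)"
    unfolding sum_zeta_geometric[OF assms] by simp
  finally show ?thesis .
qed

text \<open>With \<open>m = k + n - N s\<close>, the exponent \<open>m\<^sup>2 - n\<^sup>2\<close> differs from \<open>k\<^sup>2 + 2 k n\<close>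
  by \<open>N\<^sup>2 s\<^sup>2 - 2 N s (k + n)\<close>, a multiple of the period \<open>2 N\<close> only because \<open>N\<close> is even.\<close>
lemma zeta_square_diff:
  fixes m n k :: int
  assumes "even N" and "int N dvd (k + n - m)"
  shows "zeta N (m\<^sup>2 - n\<^sup>2) = zeta N (k\<^sup>2) * zeta N (2 * k * n)"
proof -
  obtain h where h: "N = 2 * h" using assms(1) by blast
  obtain s where "k + n - m = int N * s" using assms(2) by blast
  then have m: "m = k + n - int N * s" by simp
  have "m\<^sup>2 - n\<^sup>2 = (k\<^sup>2 + 2 * k * n) + 2 * int N * (int h * s\<^sup>2 - s * k - s * n)"
    unfolding m h by (simp add: power2_eq_square algebra_simps)
  then show ?thesis
    by (simp add: zeta_multiple_2N zeta_add)
qed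

lemma mat_inv_eqI:
  assumes A: "A \<in> carrier_mat n n" and B: "B \<in> carrier_mat n n"
    and "A * B = 1\<^sub>m n" and "B * A = 1\<^sub>m n"
  shows "mat_inv A = B"
proof -
  let ?P = "\<lambda>B. B \<in> carrier_mat (dim_row A) (dim_row A) \<and> inverts_mat A B \<and> inverts_mat B A"
  have "?P B"
    using assms by (simp add: inverts_mat_def)
  then have "?P (mat_inv A)"
    unfolding mat_inv_def by (rule someI)
  then have C: "mat_inv A \<in> carrier_mat n n" and "mat_inv A * A = 1\<^sub>m n"
    using A by (auto simp: inverts_mat_def)
  have "mat_inv A = mat_inv A * (A * B)"
    using C \<open>A * B = 1\<^sub>m n\<close> by simp
  also have "\<dots> = (mat_inv A * A) * B"
    using A B C by (simp add: assoc_mult_mat)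
  also have "\<dots> = B"
    using B \<open>mat_inv A * A = 1\<^sub>m n\<close> by simp
  finally show ?thesis .
qed

lemma mat_int_pow_of_group_hom:
  fixes X :: "int \<Rightarrow> complex mat"
  assumes carrier: "\<And>a. X a \<in> carrier_mat n n" and zero: "X 0 = 1\<^sub>m n"
    and add: "\<And>a b. X a * X b = X (a + b)"
  shows "mat_int_pow (X 1) k = X k"
proof -
  have power: "X a ^\<^sub>m l = X (a * int l)" for a l
    by (induction l) (use carrier_matD[OF carrier] zero in \<open>simp_all add: add algebra_simps\<close>)
  have "mat_inv (X 1) = X (- 1)"
    by (rule mat_inv_eqI[OF carrier carrier]) (simp_all add: add zero)
  then show ?thesis
    by (simp add: mat_int_pow_def power)
qed

lemma mat_adjoint_eq: "mat_adjoint A = mat (dim_col A) (dim_row A) (\<lambda>(i, j). cnj (A $$ (j, i)))"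
  by (rule eq_matI) (auto simp: mat_adjoint_def mat_of_rows_def)

lemma index_mult_diag_mult_adjoint:
  assumes "A \<in> carrier_mat r n" and "i < r" and "j < r"
  shows "(A * mat_diag n f * mat_adjoint A) $$ (i, j) = (\<Sum>l<n. A $$ (i, l) * f l * cnj (A $$ (j, l)))"
  using assms
  by (simp add: mat_diag_mult_right mat_adjoint_eq scalar_prod_def atLeast0LessThan)

definition delta_pow_mat :: "nat \<Rightarrow> int \<Rightarrow> complex mat" where
  "delta_pow_mat N k = mat_diag N (\<lambda>l. zeta N (2 * k * int l))"

lemma delta_pow_mat_carrier [simp]: "delta_pow_mat N k \<in> carrier_mat N N"
  by (simp add: delta_pow_mat_def)

lemmas dim_delta_pow_mat [simp] = carrier_matD[OF delta_pow_mat_carrier]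

lemma mat_int_pow_delta_mat: "mat_int_pow (delta_mat N) k = delta_pow_mat N k"
proof -
  have "delta_mat N = delta_pow_mat N 1"
    by (rule eq_matI) (auto simp: delta_mat_def delta_pow_mat_def mat_diag_def zeta_def mult_ac)
  moreover have "mat_int_pow (delta_pow_mat N 1) k = delta_pow_mat N k"
    by (rule mat_int_pow_of_group_hom[where n = N])
      (simp_all add: delta_pow_mat_def zeta_add[symmetric] algebra_simps)
  ultimately show ?thesis by simp
qed

definition cyc_perm_pow_mat :: "nat \<Rightarrow> int \<Rightarrow> complex mat" where
  "cyc_perm_pow_mat N k = mat N N (\<lambda>(m, n). if int N dvd (k + int n - int m) then 1 else 0)"

lemma cyc_perm_pow_mat_carrier [simp]: "cyc_perm_pow_mat N k \<in> carrier_mat N N"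
  by (simp add: cyc_perm_pow_mat_def)

lemmas dim_cyc_perm_pow_mat [simp] = carrier_matD[OF cyc_perm_pow_mat_carrier]

lemma cyc_perm_pow_mat_add:
  assumes "N > 0"
  shows "cyc_perm_pow_mat N a * cyc_perm_pow_mat N b = cyc_perm_pow_mat N (a + b)"
proof (rule eq_matI)
  fix i j
  assume "i < dim_row (cyc_perm_pow_mat N (a + b))" and "j < dim_col (cyc_perm_pow_mat N (a + b))"
  then have i: "i < N" and j: "j < N" by simp_all
  define l0 where "l0 = nat ((b + int j) mod int N)"
  have l0: "l0 < N" "int l0 = (b + int j) mod int N"
    using assms by (simp_all add: l0_def nat_less_iff)
  have only_l0: "int N dvd (b + int j - int l) \<longleftrightarrow> l = l0" if "l < N" for l
    using that l0 by (auto simp: mod_eq_dvd_iff[symmetric])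
  have "(cyc_perm_pow_mat N a * cyc_perm_pow_mat N b) $$ (i, j)
      = (\<Sum>l<N. (if int N dvd (a + int l - int i) then 1 else 0)
                  * (if int N dvd (b + int j - int l) then 1 else 0))"
    using i j by (simp add: cyc_perm_pow_mat_def scalar_prod_def atLeast0LessThan)
  also have "\<dots> = (\<Sum>l<N. if l = l0 then (if int N dvd (a + int l0 - int i) then 1 else 0) else 0)"
    by (rule sum.cong) (use only_l0 in force)+
  also have "\<dots> = (if int N dvd (a + int l0 - int i) then 1 else 0)"
    using l0 by simp
  also have "\<dots> = cyc_perm_pow_mat N (a + b) $$ (i, j)"
  proof -
    have "int N dvd (b + int j - int l0)"
      using l0(2) by (simp add: minus_mod_eq_mult_div)
    moreover have "a + b + int j - int i = (a + int l0 - int i) + (b + int j - int l0)"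
      by simp
    ultimately have "int N dvd (a + int l0 - int i) \<longleftrightarrow> int N dvd (a + b + int j - int i)"
      by (metis dvd_add_left_iff)
    then show ?thesis using i j by (simp add: cyc_perm_pow_mat_def)
  qed
  finally show "(cyc_perm_pow_mat N a * cyc_perm_pow_mat N b) $$ (i, j)
      = cyc_perm_pow_mat N (a + b) $$ (i, j)" .
qed simp_all

lemma cyc_perm_pow_mat_0: "cyc_perm_pow_mat N 0 = 1\<^sub>m N"
proof -
  have "i = j" if "i < N" "j < N" "int N dvd (int j - int i)" for i j
    using that by (metis mod_eq_dvd_iff mod_less of_nat_eq_iff zmod_int)
  then show ?thesis
    by (intro eq_matI) (auto simp: cyc_perm_pow_mat_def)
qed

lemma mat_int_pow_cyc_perm_mat:
  assumes "N > 0"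
  shows "mat_int_pow (cyc_perm_mat N) k = cyc_perm_pow_mat N k"
proof -
  have "m mod N = (n + 1) mod N \<longleftrightarrow> int N dvd (1 + int n - int m)" for m n
    by (metis add.commute mod_eq_dvd_iff of_nat_1 of_nat_add of_nat_eq_iff zmod_int)
  then have "cyc_perm_mat N = cyc_perm_pow_mat N 1"
    by (intro eq_matI) (simp_all add: cyc_perm_mat_def cyc_perm_pow_mat_def)
  moreover have "mat_int_pow (cyc_perm_pow_mat N 1) k = cyc_perm_pow_mat N k"
    by (rule mat_int_pow_of_group_hom[where n = N])
      (simp_all add: cyc_perm_pow_mat_0 cyc_perm_pow_mat_add[OF assms])
  ultimately show ?thesis by simp
qed

definition fresnel_scale :: "nat \<Rightarrow> complex" where
  "fresnel_scale N = 1 / csqrt (of_nat N) * exp (- \<i> * of_real (pi / 4))"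

lemma fresnel_scale_mult_cnj: "fresnel_scale N * cnj (fresnel_scale N) = 1 / of_nat N"
proof -
  have "norm (fresnel_scale N) ^ 2 = 1 / real N"
    unfolding fresnel_scale_def by (simp add: norm_mult norm_divide power_divide)
  then show ?thesis
    by (metis complex_norm_square of_real_1 of_real_divide of_real_of_nat_eq)
qed

lemma fresnel_mat_carrier [simp]: "fresnel_mat N \<in> carrier_mat N N"
  by (simp add: fresnel_mat_def)

lemmas dim_fresnel_mat [simp] = carrier_matD[OF fresnel_mat_carrier]

lemma index_fresnel_mat:
  assumes "m < N" and "n < N"
  shows "fresnel_mat N $$ (m, n) = fresnel_scale N * zeta N ((int n - int m)\<^sup>2)"
  using assms by (simp add: fresnel_mat_def fresnel_scale_def zeta_def)

lemma index_fresnel_conj_delta_pow: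
  assumes "m < N" and "n < N"
  shows "(fresnel_mat N * delta_pow_mat N k * mat_adjoint (fresnel_mat N)) $$ (m, n)
       = (if int N dvd (k + int n - int m) then zeta N ((int m)\<^sup>2 - (int n)\<^sup>2) else 0)"
proof -
  have "(fresnel_mat N * delta_pow_mat N k * mat_adjoint (fresnel_mat N)) $$ (m, n)
      = (\<Sum>l<N. fresnel_mat N $$ (m, l) * zeta N (2 * k * int l) * cnj (fresnel_mat N $$ (n, l)))"
    unfolding delta_pow_mat_def by (rule index_mult_diag_mult_adjoint) (use assms in simp_all)
  also have "\<dots> = fresnel_scale N * cnj (fresnel_scale N)
      * (\<Sum>l<N. zeta N ((int l - int m)\<^sup>2) * zeta N (2 * k * int l) * cnj (zeta N ((int l - int n)\<^sup>2)))"
    using assms by (simp add: index_fresnel_mat sum_distrib_left mult_ac)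
  also have "\<dots> = (if int N dvd (k + int n - int m) then zeta N ((int m)\<^sup>2 - (int n)\<^sup>2) else 0)"
    using assms by (simp add: sum_fresnel_chirp_products fresnel_scale_mult_cnj)
  finally show ?thesis .
qed

lemma index_cyc_perm_pow_delta_pow:
  assumes "m < N" and "n < N"
  shows "(cyc_perm_pow_mat N k * delta_pow_mat N k) $$ (m, n)
       = (if int N dvd (k + int n - int m) then zeta N (2 * k * int n) else 0)"
  using assms unfolding delta_pow_mat_def
  by (simp add: mat_diag_mult_right[OF cyc_perm_pow_mat_carrier]) (simp add: cyc_perm_pow_mat_def)

theorem lemma2:
  fixes N p :: nat and k :: int
  assumes "p \<ge> 1" and "N = 2 ^ p"
  shows "fresnel_mat N * mat_int_pow (delta_mat N) k * mat_adjoint (fresnel_mat N)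
       = exp (\<i> * of_real (pi / real N) * of_int (k\<^sup>2))
           \<cdot>\<^sub>m (mat_int_pow (cyc_perm_mat N) k * mat_int_pow (delta_mat N) k)"
proof -
  have "N > 0" and "even N"
    using assms by simp_all
  show ?thesis
    unfolding mat_int_pow_delta_mat mat_int_pow_cyc_perm_mat[OF \<open>N > 0\<close>] zeta_def[symmetric]
  proof (rule eq_matI)
    fix m n
    assume "m < dim_row (zeta N (k\<^sup>2) \<cdot>\<^sub>m (cyc_perm_pow_mat N k * delta_pow_mat N k))"
      and "n < dim_col (zeta N (k\<^sup>2) \<cdot>\<^sub>m (cyc_perm_pow_mat N k * delta_pow_mat N k))"
    then have "m < N" and "n < N"
      by simp_all
    then show "(fresnel_mat N * delta_pow_mat N k * mat_adjoint (fresnel_mat N)) $$ (m, n)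
        = (zeta N (k\<^sup>2) \<cdot>\<^sub>m (cyc_perm_pow_mat N k * delta_pow_mat N k)) $$ (m, n)"
      by (simp add: index_fresnel_conj_delta_pow index_cyc_perm_pow_delta_pow
          zeta_square_diff[OF \<open>even N\<close>] del: index_mult_mat(1))
  qed (simp_all add: mat_adjoint_eq)
qed

end
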